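(* Let $k\ge2$ and let $z_{ij}\in\mathbb{C}$ with $|z_{ij}|=1$ for all $1\le i<j\le k$, $z_{ji}=\overline{z_{ij}}$. Then the positive map $\Phi_{2k}^{(\mathbf z)}$ defined below is indecomposable; equivalently there is a state $\rho$ on $\mathbb{C}^{2k}\otimes\mathbb{C}^{2k}$ with positive partial transpose such that $\operatorname{Tr}(W^{(\mathbf z)}\rho)<0$, where $W^{(\mathbf z)}=\frac{1}{2k}\sum_{i,j=1}^{2k}e_{ij}\otimes\Phi^{(\mathbf z)}_{2k}(e_{ij})$.
   Context: $e_{ij}=|e_i\rangle\langle e_j|$ for the standard basis of $\mathbb{C}^{2k}$. Write $X\in M_{2k}(\mathbb{C})$ as a $k\times k$ block matrix $X=(X_{ij})$ with $X_{ij}\in M_2(\mathbb{C})$, and let $R_2(Y)=\mathbb{I}_2\operatorname{Tr}Y-Y$ on $M_2(\mathbb{C})$. $\Phi_{2k}^{(\mathbf z)}(X)$ is the block matrix with diagonal blocks $\frac{1}{2(k-1)}(\operatorname{Tr}X-\operatorname{Tr}X_{ii})\mathbb{I}_2$ and off-diagonal blocks $-\frac{z_{ij}}{2(k-1)}(X_{ij}-R_2(X_{ji}))$, $i\ne j$. A positive map $\Lambda$ is decomposable if $\Lambda=\Lambda_1+\Lambda_2\circ\mathrm T$ with $\Lambda_1,\Lambda_2$ completely positive and $\mathrm T$ the transposition; otherwise indecomposable. A state $\rho$ is PPT if $(\mathrm{id}\otimes\mathrm T)\rho\ge0$. *)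

theory Defs
  imports Complex_Main "Jordan_Normal_Form.Matrix"
begin

definition psd :: "nat \<Rightarrow> complex mat \<Rightarrow> bool" where
  "psd n A \<longleftrightarrow> A \<in> carrier_mat n n \<and>
     (\<forall>v :: nat \<Rightarrow> complex.
        Im (\<Sum>i<n. \<Sum>j<n. cnj (v i) * A $$ (i,j) * v j) = 0 \<and>
        Re (\<Sum>i<n. \<Sum>j<n. cnj (v i) * A $$ (i,j) * v j) \<ge> 0)"

definition linear_map_on :: "nat \<Rightarrow> (complex mat \<Rightarrow> complex mat) \<Rightarrow> bool" where
  "linear_map_on n L \<longleftrightarrow>
     (\<forall>X \<in> carrier_mat n n. L X \<in> carrier_mat n n) \<and>
     (\<forall>X \<in> carrier_mat n n. \<forall>Y \<in> carrier_mat n n. L (X + Y) = L X + L Y) \<and>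
     (\<forall>X \<in> carrier_mat n n. \<forall>c. L (c \<cdot>\<^sub>m X) = c \<cdot>\<^sub>m L X)"

definition blk :: "nat \<Rightarrow> complex mat \<Rightarrow> nat \<Rightarrow> nat \<Rightarrow> complex mat" where
  "blk n M a b = mat n n (\<lambda>(r,s). M $$ (a*n + r, b*n + s))"

text \<open>(id_m tensor L) applied to an (m n) x (m n) matrix viewed as m x m block matrix.\<close>
definition amplify :: "nat \<Rightarrow> nat \<Rightarrow> (complex mat \<Rightarrow> complex mat) \<Rightarrow> complex mat \<Rightarrow> complex mat" where
  "amplify m n L M = mat (m*n) (m*n)
     (\<lambda>(i,j). L (blk n M (i div n) (j div n)) $$ (i mod n, j mod n))"

definition completely_positive :: "nat \<Rightarrow> (complex mat \<Rightarrow> complex mat) \<Rightarrow> bool" where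
  "completely_positive n L \<longleftrightarrow> linear_map_on n L \<and>
     (\<forall>m M. psd (m*n) M \<longrightarrow> psd (m*n) (amplify m n L M))"

definition decomposable :: "nat \<Rightarrow> (complex mat \<Rightarrow> complex mat) \<Rightarrow> bool" where
  "decomposable n L \<longleftrightarrow> (\<exists>L1 L2. completely_positive n L1 \<and> completely_positive n L2 \<and>
     (\<forall>X \<in> carrier_mat n n. L X = L1 X + L2 (transpose_mat X)))"

definition tr :: "complex mat \<Rightarrow> complex" where
  "tr X = (\<Sum>i<dim_row X. X $$ (i,i))"

definition R2 :: "complex mat \<Rightarrow> complex mat" where
  "R2 Y = tr Y \<cdot>\<^sub>m 1\<^sub>m 2 - Y"

text \<open>The map Phi_{2k}^{(z)}; blocks indexed 0..k-1 (paper: 1..k), block (a,b) = rows 2a,2a+1, cols 2b,2b+1.\<close>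
definition Phi :: "nat \<Rightarrow> (nat \<Rightarrow> nat \<Rightarrow> complex) \<Rightarrow> complex mat \<Rightarrow> complex mat" where
  "Phi k z X = mat (2*k) (2*k) (\<lambda>(p,q).
     (let a = p div 2; b = q div 2; r = p mod 2; s = q mod 2 in
      if a = b then
        (if r = s then (tr X - tr (blk 2 X a a)) / (2 * (of_nat k - 1)) else 0)
      else - z a b / (2 * (of_nat k - 1)) *
             ((blk 2 X a b - R2 (blk 2 X b a)) $$ (r, s))))"

end

theory Submission
  imports Defs
begin

text \<open>
  Write C(L) = \<Sum>_ij E_ij \<otimes> L(E_ij) for the Choi matrix of a map L on M_n.
  If L is completely positive, C(L) is positive semidefinite, being the image of the
  rank-one projector onto \<Sum>_i e_i \<otimes> e_i under id \<otimes> L.  If L = L_1 + L_2 \<circ> T is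
  decomposable, then C(L) = C(L_1) + C(L_2)^\<Gamma>, where \<Gamma> is the partial transpose.  Hence for
  every unnormalised state \<rho> = \<Sum> |v\<rangle>\<langle>v| whose partial transpose is again of the form
  \<Sum> |w\<rangle>\<langle>w| (a PPT state), the pairing Tr(C(L) \<rho>) has nonnegative real part.

  Finally an explicit
  PPT state supported on the first two 2x2 blocks pairs with the Choi matrix of
  Phi_2k to the negative value -8/(2k-2), so Phi_2k cannot be decomposable.
\<close>

definition E :: "nat \<Rightarrow> nat \<Rightarrow> nat \<Rightarrow> complex mat" where
  "E n a b = mat n n (\<lambda>(r,s). if r = a \<and> s = b then 1 else 0)"

lemma E_index[simp]:
  "r < n \<Longrightarrow> s < n \<Longrightarrow> E n a b $$ (r,s) = (if r = a \<and> s = b then 1 else 0)"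
  by (simp add: E_def)

lemma E_carrier[simp]: "E n a b \<in> carrier_mat n n"
  by (simp add: E_def)

lemma transpose_E: "transpose_mat (E n a b) = E n b a"
  by (rule eq_matI) (auto simp: E_def)

lemma tr_E: "a < n \<Longrightarrow> tr (E n a b) = (if a = b then 1 else 0)"
proof -
  assume "a < n"
  have "tr (E n a b) = (\<Sum>i<n. if i = a then (if a = b then 1 else 0) else 0)"
    unfolding tr_def by (intro sum.cong) (auto simp: E_def)
  also have "\<dots> = (if a = b then 1 else 0)" using \<open>a < n\<close> by simp
  finally show ?thesis .
qed

lemma blk_index[simp]:
  "r < m \<Longrightarrow> s < m \<Longrightarrow> blk m X a b $$ (r,s) = X $$ (a*m+r, b*m+s)"
  by (simp add: blk_def)

lemma blk_dims[simp]: "dim_row (blk m X a b) = m" "dim_col (blk m X a b) = m"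
  by (simp_all add: blk_def)

lemma tr_2x2: "dim_row Y = 2 \<Longrightarrow> tr Y = Y $$ (0,0) + Y $$ (1,1)"
  by (simp add: tr_def eval_nat_numeral)

lemma R2_dims[simp]: "dim_row (R2 Y) = dim_row Y" "dim_col (R2 Y) = dim_col Y"
  by (simp_all add: R2_def)

lemma R2_index:
  "dim_row Y = 2 \<Longrightarrow> dim_col Y = 2 \<Longrightarrow> r < 2 \<Longrightarrow> s < 2 \<Longrightarrow>
   R2 Y $$ (r,s) = (if r = s then Y $$ (0,0) + Y $$ (1,1) else 0) - Y $$ (r,s)"
  by (simp add: R2_def tr_2x2)

lemma Phi_index:
  "n = 2*k \<Longrightarrow> p < n \<Longrightarrow> q < n \<Longrightarrow> Phi k z X $$ (p,q) =
   (let a = p div 2; b = q div 2; r = p mod 2; s = q mod 2 in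
      if a = b then
        (if r = s then (tr X - tr (blk 2 X a a)) / (2 * (of_nat k - 1)) else 0)
      else - z a b / (2 * (of_nat k - 1)) *
             ((blk 2 X a b - R2 (blk 2 X b a)) $$ (r, s)))"
  by (simp add: Phi_def)

section \<open>Quadratic forms of finitely supported vectors\<close>

text \<open>A list of triples (c, i, p) denotes the vector \<Sum> c \<cdot> e_i \<otimes> e_p in C^n \<otimes> C^n,
  whose coordinate at position i*n+p collects the coefficients c.\<close>
definition sparse_vec :: "nat \<Rightarrow> (complex \<times> nat \<times> nat) list \<Rightarrow> nat \<Rightarrow> complex" where
  "sparse_vec n vs x = (\<Sum>(c,i,p)\<leftarrow>vs. if x = i*n+p then c else 0)"

text \<open>The quadratic form \<langle>v, C v\<rangle> of such a vector, for a matrix C given by its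
  entries C i p j q at position ((i,p),(j,q)).\<close>
definition sparse_form ::
    "(nat \<Rightarrow> nat \<Rightarrow> nat \<Rightarrow> nat \<Rightarrow> complex) \<Rightarrow> (complex \<times> nat \<times> nat) list \<Rightarrow> complex" where
  "sparse_form C vs = (\<Sum>(c,i,p)\<leftarrow>vs. \<Sum>(d,j,q)\<leftarrow>vs. cnj c * C i p j q * d)"

lemma sum_times_sparse_vec:
  assumes "\<forall>(c,i,p)\<in>set vs. i*n+p < N"
  shows "(\<Sum>y<N. g y * sparse_vec n vs y) = (\<Sum>(c,i,p)\<leftarrow>vs. g (i*n+p) * c)"
  using assms
proof (induction vs)
  case Nil
  then show ?case by (simp add: sparse_vec_def)
next
  case (Cons t vs)
  obtain c i p where t: "t = (c,i,p)" by (cases t) auto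
  have "i*n+p < N" using Cons.prems t by auto
  have "(\<Sum>y<N. g y * sparse_vec n (t#vs) y)
      = (\<Sum>y<N. (if y = i*n+p then g y * c else 0) + g y * sparse_vec n vs y)"
    by (rule sum.cong) (auto simp: sparse_vec_def t distrib_left)
  also have "\<dots> = g (i*n+p) * c + (\<Sum>y<N. g y * sparse_vec n vs y)"
    using \<open>i*n+p < N\<close> by (simp add: sum.distrib)
  finally show ?case using Cons by (simp add: t)
qed

lemma sum_cnj_sparse_vec_times:
  assumes "\<forall>(c,i,p)\<in>set vs. i*n+p < N"
  shows "(\<Sum>y<N. cnj (sparse_vec n vs y) * g y) = (\<Sum>(c,i,p)\<leftarrow>vs. cnj c * g (i*n+p))"
  using assms
proof (induction vs)
  case Nil
  then show ?case by (simp add: sparse_vec_def)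
next
  case (Cons t vs)
  obtain c i p where t: "t = (c,i,p)" by (cases t) auto
  have "i*n+p < N" using Cons.prems t by auto
  have "(\<Sum>y<N. cnj (sparse_vec n (t#vs) y) * g y)
      = (\<Sum>y<N. (if y = i*n+p then cnj c * g y else 0) + cnj (sparse_vec n vs y) * g y)"
    by (rule sum.cong) (auto simp: sparse_vec_def t distrib_right)
  also have "\<dots> = cnj c * g (i*n+p) + (\<Sum>y<N. cnj (sparse_vec n vs y) * g y)"
    using \<open>i*n+p < N\<close> by (simp add: sum.distrib)
  finally show ?case using Cons by (simp add: t)
qed

lemma quadratic_form_sparse_vec:
  assumes "\<forall>(c,i,p)\<in>set vs. i*n+p < N"
  shows "(\<Sum>x<N. \<Sum>y<N. cnj (sparse_vec n vs x) * A $$ (x,y) * sparse_vec n vs y)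
       = sparse_form (\<lambda>i p j q. A $$ (i*n+p, j*n+q)) vs"
proof -
  have "(\<Sum>x<N. \<Sum>y<N. cnj (sparse_vec n vs x) * A $$ (x,y) * sparse_vec n vs y)
      = (\<Sum>x<N. cnj (sparse_vec n vs x) * (\<Sum>y<N. A $$ (x,y) * sparse_vec n vs y))"
    by (simp add: sum_distrib_left mult.assoc)
  also have "\<dots> = (\<Sum>x<N. cnj (sparse_vec n vs x) * (\<Sum>(d,j,q)\<leftarrow>vs. A $$ (x,j*n+q) * d))"
    using sum_times_sparse_vec[OF assms] by simp
  also have "\<dots> = (\<Sum>(c,i,p)\<leftarrow>vs. cnj c * (\<Sum>(d,j,q)\<leftarrow>vs. A $$ (i*n+p,j*n+q) * d))"
    by (rule sum_cnj_sparse_vec_times[OF assms])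
  also have "\<dots> = sparse_form (\<lambda>i p j q. A $$ (i*n+p, j*n+q)) vs"
    unfolding sparse_form_def
    by (auto simp: sum_list_const_mult[symmetric] mult.assoc split: prod.splits
             intro!: arg_cong[where f=sum_list] map_cong)
  finally show ?thesis .
qed

lemma sparse_form_cong:
  "(\<And>c i p d j q. (c,i,p) \<in> set vs \<Longrightarrow> (d,j,q) \<in> set vs \<Longrightarrow> C i p j q = C' i p j q)
   \<Longrightarrow> sparse_form C vs = sparse_form C' vs"
  unfolding sparse_form_def
  by (auto split: prod.splits intro!: arg_cong[where f=sum_list] map_cong)

lemma sparse_form_add:
  "sparse_form (\<lambda>i p j q. C i p j q + C' i p j q) vs = sparse_form C vs + sparse_form C' vs"
  unfolding sparse_form_def
  by (simp add: distrib_left distrib_right sum_list_addf split_def)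

lemma Re_sum_list_nonneg:
  "(\<And>x. x \<in> set xs \<Longrightarrow> 0 \<le> Re (f x)) \<Longrightarrow> 0 \<le> Re (sum_list (map f xs))"
  by (induction xs) auto

section \<open>Positivity of the Choi matrix of a completely positive map\<close>

text \<open>The unnormalised maximally entangled projector |\<Omega>\<rangle>\<langle>\<Omega>| with \<Omega> = \<Sum>_i e_i \<otimes> e_i;
  as a block matrix its (i,j) block is E_ij.\<close>
definition omega :: "nat \<Rightarrow> complex mat" where
  "omega n = mat (n*n) (n*n) (\<lambda>(x,y). if x mod n = x div n \<and> y mod n = y div n then 1 else 0)"

lemma omega_psd: "psd (n*n) (omega n)"
proof -
  have "Im (\<Sum>x<n*n. \<Sum>y<n*n. cnj (v x) * omega n $$ (x,y) * v y) = 0 \<and>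
        Re (\<Sum>x<n*n. \<Sum>y<n*n. cnj (v x) * omega n $$ (x,y) * v y) \<ge> 0" for v
  proof -
    define S where "S = (\<Sum>y<n*n. if y mod n = y div n then v y else 0)"
    have cnj_S: "(\<Sum>x<n*n. if x mod n = x div n then cnj (v x) else 0) = cnj S"
      unfolding S_def cnj_sum by (rule sum.cong) auto
    have "(\<Sum>x<n*n. \<Sum>y<n*n. cnj (v x) * omega n $$ (x,y) * v y)
        = (\<Sum>x<n*n. \<Sum>y<n*n. (if x mod n = x div n then cnj (v x) else 0)
                              * (if y mod n = y div n then v y else 0))"
      by (intro sum.cong refl) (auto simp: omega_def)
    also have "\<dots> = (\<Sum>x<n*n. if x mod n = x div n then cnj (v x) else 0) * S"
      by (simp add: S_def sum_product)
    also have "\<dots> = cnj S * S"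
      by (simp only: cnj_S)
    also have "\<dots> = of_real ((cmod S)^2)"
      by (metis complex_norm_square mult.commute)
    finally show ?thesis by simp
  qed
  then show ?thesis unfolding psd_def by (simp add: omega_def)
qed

lemma block_index_less: "(i::nat) < n \<Longrightarrow> p < n \<Longrightarrow> i*n+p < n*n"
proof -
  assume "i < n" "p < n"
  then have "i*n+p < Suc i * n" by simp
  also have "\<dots> \<le> n*n" using \<open>i < n\<close> by (intro mult_le_mono1) simp
  finally show ?thesis .
qed

lemma blk_omega: "i < n \<Longrightarrow> j < n \<Longrightarrow> blk n (omega n) i j = E n i j"
  by (rule eq_matI) (auto simp: blk_def E_def omega_def block_index_less)

lemma choi_index:
  "i < n \<Longrightarrow> j < n \<Longrightarrow> p < n \<Longrightarrow> q < n \<Longrightarrow>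
   amplify n n L (omega n) $$ (i*n+p, j*n+q) = L (E n i j) $$ (p,q)"
  by (simp add: amplify_def block_index_less blk_omega)

lemma cp_sparse_form_nonneg:
  assumes "completely_positive n L" and "\<forall>(c,i,p)\<in>set vs. i < n \<and> p < n"
  shows "0 \<le> Re (sparse_form (\<lambda>i p j q. L (E n i j) $$ (p,q)) vs)"
proof -
  let ?C = "amplify n n L (omega n)"
  have "psd (n*n) ?C"
    using assms(1) omega_psd unfolding completely_positive_def by blast
  then have "0 \<le> Re (\<Sum>x<n*n. \<Sum>y<n*n. cnj (sparse_vec n vs x) * ?C $$ (x,y) * sparse_vec n vs y)"
    unfolding psd_def by blast
  also have "(\<Sum>x<n*n. \<Sum>y<n*n. cnj (sparse_vec n vs x) * ?C $$ (x,y) * sparse_vec n vs y)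
     = sparse_form (\<lambda>i p j q. ?C $$ (i*n+p, j*n+q)) vs"
    by (rule quadratic_form_sparse_vec) (use assms(2) in \<open>auto intro!: block_index_less\<close>)
  also have "\<dots> = sparse_form (\<lambda>i p j q. L (E n i j) $$ (p,q)) vs"
    by (intro sparse_form_cong choi_index) (use assms(2) in fastforce)+
  finally show ?thesis .
qed

section \<open>PPT states detect indecomposability\<close>

text \<open>A PPT witness in C^n \<otimes> C^n: an unnormalised state \<rho> = \<Sum>_v\<in>V |v\<rangle>\<langle>v| whose partial
  transpose equals \<Sum>_w\<in>W |w\<rangle>\<langle>w|, expressed by equality of the pairings with every matrix.\<close>
definition ppt_witness ::
    "nat \<Rightarrow> (complex \<times> nat \<times> nat) list list \<Rightarrow> (complex \<times> nat \<times> nat) list list \<Rightarrow> bool" where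
  "ppt_witness n V W \<longleftrightarrow>
     (\<forall>vs \<in> set V \<union> set W. \<forall>(c,i,p)\<in>set vs. i < n \<and> p < n) \<and>
     (\<forall>C. (\<Sum>vs\<leftarrow>V. sparse_form (\<lambda>i p j q. C j p i q) vs) = (\<Sum>vs\<leftarrow>W. sparse_form C vs))"

text \<open>Decomposable maps pair nonnegatively with every PPT state: the L_1 part is handled by
  V directly, the L_2 \<circ> T part becomes, after partial transposition, a pairing with W.\<close>
lemma decomposable_ppt_nonneg:
  assumes "decomposable n L" and "ppt_witness n V W"
  shows "0 \<le> Re (\<Sum>vs\<leftarrow>V. sparse_form (\<lambda>i p j q. L (E n i j) $$ (p,q)) vs)"
proof -
  obtain L1 L2 where cp1: "completely_positive n L1" and cp2: "completely_positive n L2"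
    and L: "\<And>X. X \<in> carrier_mat n n \<Longrightarrow> L X = L1 X + L2 (transpose_mat X)"
    using assms(1) unfolding decomposable_def by blast
  have bounds: "\<forall>(c,i,p)\<in>set vs. i < n \<and> p < n" if "vs \<in> set V \<union> set W" for vs
    using assms(2) that unfolding ppt_witness_def by blast
  have L_entry: "L (E n i j) $$ (p,q) = L1 (E n i j) $$ (p,q) + L2 (E n j i) $$ (p,q)"
    if "p < n" "q < n" for i j p q
  proof -
    have "L2 (E n j i) \<in> carrier_mat n n"
      using cp2 unfolding completely_positive_def linear_map_on_def by simp
    then show ?thesis using L[of "E n i j"] that by (simp add: transpose_E)
  qed
  have split: "sparse_form (\<lambda>i p j q. L (E n i j) $$ (p,q)) vs =
       sparse_form (\<lambda>i p j q. L1 (E n i j) $$ (p,q)) vs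
     + sparse_form (\<lambda>i p j q. L2 (E n j i) $$ (p,q)) vs"
    if "vs \<in> set V" for vs
    using bounds[of vs] that
    by (subst sparse_form_add[symmetric], intro sparse_form_cong L_entry) fastforce+
  have "(\<Sum>vs\<leftarrow>V. sparse_form (\<lambda>i p j q. L (E n i j) $$ (p,q)) vs)
      = (\<Sum>vs\<leftarrow>V. sparse_form (\<lambda>i p j q. L1 (E n i j) $$ (p,q)) vs)
      + (\<Sum>vs\<leftarrow>W. sparse_form (\<lambda>i p j q. L2 (E n i j) $$ (p,q)) vs)"
    using assms(2) split unfolding ppt_witness_def
    by (simp add: sum_list_addf cong: map_cong)
  moreover have "0 \<le> Re (\<Sum>vs\<leftarrow>V. sparse_form (\<lambda>i p j q. L1 (E n i j) $$ (p,q)) vs)"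
    using bounds by (intro Re_sum_list_nonneg cp_sparse_form_nonneg[OF cp1]) blast
  moreover have "0 \<le> Re (\<Sum>vs\<leftarrow>W. sparse_form (\<lambda>i p j q. L2 (E n i j) $$ (p,q)) vs)"
    using bounds by (intro Re_sum_list_nonneg cp_sparse_form_nonneg[OF cp2]) blast
  ultimately show ?thesis by simp
qed

section \<open>An explicit PPT state detecting the indecomposability of Phi\<close>

text \<open>The state lives on the first four coordinates (the first two 2x2 blocks) of both
  tensor factors and depends on the phase w = z_01.\<close>
definition witness_V :: "complex \<Rightarrow> (complex \<times> nat \<times> nat) list list" where
  "witness_V w = [[(1,0,0),(1,1,1),(cnj w,2,2),(cnj w,3,3)],
           [(1,0,2),(w,3,1)], [(1,1,3),(w,2,0)], [(1,0,3),(-w,2,1)], [(1,1,2),(-w,3,0)],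
           [(1,0,1)],[(1,0,1)],[(1,0,1)], [(1,1,0)],[(1,1,0)],[(1,1,0)],
           [(cnj w,2,3)],[(cnj w,2,3)],[(cnj w,2,3)], [(cnj w,3,2)],[(cnj w,3,2)],[(cnj w,3,2)]]"

definition witness_W :: "complex \<Rightarrow> (complex \<times> nat \<times> nat) list list" where
  "witness_W w = [[(1,0,0)],[(1,1,1)],[(cnj w,2,2)],[(cnj w,3,3)],
           [(1,0,2),(w,2,0)], [(1,0,3),(w,3,0)], [(1,1,2),(w,2,1)], [(1,1,3),(w,3,1)],
           [(1,0,1),(1,1,0),(cnj w,2,3),(cnj w,3,2)],
           [(1,0,1),(-1,1,0),(-cnj w,2,3),(cnj w,3,2)],
           [(1,0,1),(1,1,0),(-cnj w,2,3),(-cnj w,3,2)]]"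

text \<open>The partial transpose identity is a polynomial identity in the entries of C.\<close>
lemma witness_ppt: "4 \<le> n \<Longrightarrow> ppt_witness n (witness_V w) (witness_W w)"
  unfolding ppt_witness_def witness_V_def witness_W_def sparse_form_def
  by (auto simp: algebra_simps)

text \<open>Pairing the witness with the Choi matrix of Phi_2k; only z_01, z_10 enter, and the
  unimodularity of z_01 makes the phases cancel.\<close>
lemma witness_value:
  assumes n: "n = 2*k" and k: "k \<ge> 2"
    and z10: "z 1 0 = cnj (z 0 1)" and unimodular: "z 0 1 * cnj (z 0 1) = 1"
  shows "(\<Sum>vs\<leftarrow>witness_V (z 0 1). sparse_form (\<lambda>i p j q. Phi k z (E n i j) $$ (p,q)) vs)
     = -8 / (2 * of_nat k - 2)"
proof -
  have in_range: "0 < n" "1 < n" "2 < n" "3 < n" "Suc 0 < n" using k n by auto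
  have z10': "z (Suc 0) 0 = cnj (z 0 (Suc 0))"
    and unimodular': "z 0 (Suc 0) * cnj (z 0 (Suc 0)) = 1"
    using z10 unimodular by simp_all
  show ?thesis
    unfolding witness_V_def sparse_form_def
    by (simp add: in_range Phi_index[OF n] Let_def tr_E tr_2x2 R2_index z10',
        simp add: unimodular')
qed

lemma witness_value_negative: "k \<ge> 2 \<Longrightarrow> Re (-8 / (2 * complex_of_nat k - 2)) < 0"
proof -
  assume "k \<ge> 2"
  then have "-8 / (2 * real k - 2) < 0" by (simp add: divide_neg_pos)
  moreover have "-8 / (2 * complex_of_nat k - 2) = complex_of_real (-8 / (2 * real k - 2))"
    by simp
  ultimately show ?thesis by simp
qed

theorem mainTheorem9:
  fixes k :: nat and z :: "nat \<Rightarrow> nat \<Rightarrow> complex"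
  assumes "k \<ge> 2"
    and "\<And>i j. i < j \<Longrightarrow> j < k \<Longrightarrow> cmod (z i j) = 1"
    and "\<And>i j. i < j \<Longrightarrow> j < k \<Longrightarrow> z j i = cnj (z i j)"
  shows "\<not> decomposable (2*k) (Phi k z)"
proof
  assume decomposable: "decomposable (2*k) (Phi k z)"
  have "0 < (1::nat)" "1 < k" using assms(1) by auto
  then have unimodular: "z 0 1 * cnj (z 0 1) = 1" and z10: "z 1 0 = cnj (z 0 1)"
    using assms(2,3) by (metis complex_norm_square of_real_1 power_one)+
  have "ppt_witness (2*k) (witness_V (z 0 1)) (witness_W (z 0 1))"
    using assms(1) by (intro witness_ppt) simp
  from decomposable_ppt_nonneg[OF decomposable this]
  have "0 \<le> Re (-8 / (2 * complex_of_nat k - 2))"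
    by (simp only: witness_value[OF refl assms(1) z10 unimodular])
  with witness_value_negative[OF assms(1)] show False by simp
qed

end
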